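(* Let $a\in \mathcal{A}$. Then $a\in \mathcal{A}^{\mathrm{gcEP}}$ if and only if (1) $a\in \mathcal{A}^d$; and (2) there exists a unique projection $q\in \mathcal{A}$ such that $\ell(a^d)=\ell(q)$.
   Context: $\mathcal{A}$ is a complex Banach *-algebra with identity; a projection is $q$ with $q=q^2=q^*$. $\mathcal{A}^d$ is the set of generalized Drazin invertible elements, with $a^d$ the generalized Drazin inverse ($a(a^d)^2=a^d$, $aa^d=a^da$, $a-a^2a^d$ quasinilpotent). $\mathcal{A}^{\mathrm{gcEP}}$ is the set of $a$ for which there is $x\in\mathcal{A}$ with $x=ax^2$, $(ax)^*=ax$, $\lim_{n\to\infty}\|a^n-xa^{n+1}\|^{1/n}=0$ (generalized core-EP invertible elements). $\ell(\cdot)$ denotes the left annihilator. *)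

theory Defs
  imports "HOL-Analysis.Analysis"
begin

text \<open>A complex Banach *-algebra with identity: the carrier is a type of class
  real_normed_algebra_1 and banach (complete normed real algebra with unit, norm 1 = 1),
  equipped with a complex scalar multiplication cs extending the real one, and an
  involution st.\<close>

definition complex_banach_star_algebra ::
  "(complex \<Rightarrow> 'a::{real_normed_algebra_1,banach} \<Rightarrow> 'a) \<Rightarrow> ('a \<Rightarrow> 'a) \<Rightarrow> bool" where
  "complex_banach_star_algebra cs st \<longleftrightarrow>
     (\<forall>r x. cs (complex_of_real r) x = r *\<^sub>R x) \<and>
     (\<forall>c d x. cs (c * d) x = cs c (cs d x)) \<and>
     (\<forall>c d x. cs (c + d) x = cs c x + cs d x) \<and>
     (\<forall>c x y. cs c (x + y) = cs c x + cs c y) \<and>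
     (\<forall>c x. norm (cs c x) = cmod c * norm x) \<and>
     (\<forall>c x y. cs c (x * y) = cs c x * y) \<and>
     (\<forall>c x y. cs c (x * y) = x * cs c y) \<and>
     (\<forall>x. st (st x) = x) \<and>
     (\<forall>x y. st (x + y) = st x + st y) \<and>
     (\<forall>x y. st (x * y) = st y * st x) \<and>
     (\<forall>c x. st (cs c x) = cs (cnj c) (st x))"

definition quasinilpotent :: "'a::real_normed_algebra_1 \<Rightarrow> bool" where
  "quasinilpotent x \<longleftrightarrow> (\<lambda>n. norm (x ^ n) powr (1 / real n)) \<longlonglongrightarrow> 0"

definition is_gdrazin_inv :: "'a::real_normed_algebra_1 \<Rightarrow> 'a \<Rightarrow> bool" where
  "is_gdrazin_inv a x \<longleftrightarrow> a * x ^ 2 = x \<and> a * x = x * a \<and> quasinilpotent (a - a ^ 2 * x)"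

definition gdrazin_invertible :: "'a::real_normed_algebra_1 set" where
  "gdrazin_invertible = {a. \<exists>x. is_gdrazin_inv a x}"

definition gdrazin :: "'a::real_normed_algebra_1 \<Rightarrow> 'a" where
  "gdrazin a = (THE x. is_gdrazin_inv a x)"

definition is_projection :: "('a::real_normed_algebra_1 \<Rightarrow> 'a) \<Rightarrow> 'a \<Rightarrow> bool" where
  "is_projection st q \<longleftrightarrow> q = q ^ 2 \<and> q = st q"

definition left_ann :: "'a::real_normed_algebra_1 \<Rightarrow> 'a set" where
  "left_ann x = {y. y * x = 0}"

definition gcEP_invertible :: "('a::real_normed_algebra_1 \<Rightarrow> 'a) \<Rightarrow> 'a set" where
  "gcEP_invertible st = {a. \<exists>x. x = a * x ^ 2 \<and> st (a * x) = a * x \<and>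
      (\<lambda>n. norm (a ^ n - x * a ^ (n + 1)) powr (1 / real n)) \<longlonglongrightarrow> 0}"

end

theory Submission
  imports Defs
begin

text \<open>
  If x is a gcEP inverse of a, the residuals w n = a^n - x a^(n+1) have n-th roots of their norms
  tending to 0. Multiplying w n by powers of x forces x a x = x, so a x is a projection, and makes
  the approximants x^(n+1) a^n converge, since consecutive ones differ by x^(n+1) w n. Their limit d
  is the generalized Drazin inverse: with p = 1 - a d one has (a p)^n = p w n, so a p is
  quasinilpotent. The idempotents a d and a x absorb each other, hence l(a^d) = l(a d) = l(a x).
  Conversely, if q is a projection with l(a^d) = l(q), then a a^d q = q and x = a^d q is a gcEP
  inverse, because a^n - x a^(n+1) = (1 - x a) (a (1 - a a^d))^n. Two projections with the same
  left annihilator absorb each other, e f = f and f e = e, and taking adjoints gives e = f.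
\<close>

definition root_null :: "(nat \<Rightarrow> 'a::real_normed_vector) \<Rightarrow> bool" where
  "root_null w \<longleftrightarrow> (\<lambda>n. norm (w n) powr (1 / real n)) \<longlonglongrightarrow> 0"

lemma root_null_dominated:
  fixes w :: "nat \<Rightarrow> 'a::real_normed_vector" and v :: "nat \<Rightarrow> 'b::real_normed_vector"
  assumes w: "root_null w"
    and bound: "\<forall>\<^sub>F n in sequentially. norm (v n) \<le> K * C ^ n * norm (w n)"
    and "K \<ge> 0" "C \<ge> 0"
  shows "root_null v"
  unfolding root_null_def
proof (rule Lim_null_comparison)
  define K' C' where "K' = K + 1" and "C' = C + 1"
  have "K' > 0" "C' > 0" using assms(3,4) by (auto simp: K'_def C'_def)
  have "(\<lambda>n. K' powr (1 / real n)) \<longlonglongrightarrow> K' powr 0"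
    by (rule tendsto_powr) (use \<open>K' > 0\<close> lim_1_over_n in auto)
  from tendsto_mult[OF tendsto_mult[OF this tendsto_const] w[unfolded root_null_def]]
  show "(\<lambda>n. K' powr (1 / real n) * C' * norm (w n) powr (1 / real n)) \<longlonglongrightarrow> 0"
    by simp
  show "\<forall>\<^sub>F n in sequentially. norm (norm (v n) powr (1 / real n))
          \<le> K' powr (1 / real n) * C' * norm (w n) powr (1 / real n)"
    using bound eventually_gt_at_top[of 0]
  proof eventually_elim
    case (elim n)
    have "K * C ^ n * norm (w n) \<le> K' * C' ^ n * norm (w n)"
      using assms(3,4) by (auto simp: K'_def C'_def intro!: mult_mono power_mono)
    then have "norm (v n) powr (1 / real n) \<le> (K' * C' ^ n * norm (w n)) powr (1 / real n)"
      using elim by (intro powr_mono2) auto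
    also have "\<dots> = K' powr (1 / real n) * (C' powr real n) powr (1 / real n)
                      * norm (w n) powr (1 / real n)"
      using \<open>K' > 0\<close> \<open>C' > 0\<close> by (simp add: powr_mult powr_realpow)
    also have "(C' powr real n) powr (1 / real n) = C'"
      using elim \<open>C' > 0\<close> by (simp add: powr_powr)
    finally show ?case by simp
  qed
qed

lemma root_null_const_iff: "root_null (\<lambda>_. y) \<longleftrightarrow> y = 0"
proof
  assume null: "root_null (\<lambda>_. y)"
  show "y = 0"
  proof (rule ccontr)
    assume "y \<noteq> 0"
    then have "(\<lambda>n. norm y powr (1 / real n)) \<longlonglongrightarrow> norm y powr 0"
      by (intro tendsto_powr tendsto_const lim_1_over_n) auto
    with null \<open>y \<noteq> 0\<close> show False
      unfolding root_null_def using LIMSEQ_unique by fastforce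
  qed
qed (simp add: root_null_def)

lemma root_null_dominated_eq_0:
  fixes w :: "nat \<Rightarrow> 'a::real_normed_vector" and y :: "'b::real_normed_vector"
  assumes "root_null w" and "\<And>n. n > 0 \<Longrightarrow> norm y \<le> K * C ^ n * norm (w n)"
    and "K \<ge> 0" "C \<ge> 0"
  shows "y = 0"
proof -
  have "\<forall>\<^sub>F n in sequentially. norm y \<le> K * C ^ n * norm (w n)"
    using assms(2) by (intro eventually_sequentiallyI[of 1]) simp
  then have "root_null (\<lambda>_. y)"
    by (rule root_null_dominated[OF assms(1) _ assms(3,4)])
  then show ?thesis by (simp add: root_null_const_iff)
qed

lemma root_null_left_factor_eq_0:
  fixes w :: "nat \<Rightarrow> 'a::real_normed_algebra_1"
  assumes "root_null w" and "\<And>n. n > 0 \<Longrightarrow> y = z ^ n * w n"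
  shows "y = 0"
proof (rule root_null_dominated_eq_0[OF assms(1), where K = 1 and C = "norm z"])
  fix n :: nat assume "n > 0"
  then have "norm y \<le> norm (z ^ n) * norm (w n)"
    using assms(2) by (simp add: norm_mult_ineq)
  also have "\<dots> \<le> norm z ^ n * norm (w n)"
    by (intro mult_right_mono norm_power_ineq) simp
  finally show "norm y \<le> 1 * norm z ^ n * norm (w n)" by simp
qed simp_all

lemma root_null_right_factor_eq_0:
  fixes w :: "nat \<Rightarrow> 'a::real_normed_algebra_1"
  assumes "root_null w" and "\<And>n. n > 0 \<Longrightarrow> y = w n * z ^ n"
  shows "y = 0"
proof (rule root_null_dominated_eq_0[OF assms(1), where K = 1 and C = "norm z"])
  fix n :: nat assume "n > 0"
  then have "norm y \<le> norm (w n) * norm (z ^ n)"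
    using assms(2) by (simp add: norm_mult_ineq)
  also have "\<dots> \<le> norm (w n) * norm z ^ n"
    by (intro mult_left_mono norm_power_ineq) simp
  finally show "norm y \<le> 1 * norm z ^ n * norm (w n)" by (simp add: mult.commute)
qed simp_all

lemma summable_if_root_null:
  fixes v :: "nat \<Rightarrow> 'a::banach"
  assumes "root_null v"
  shows "summable v"
proof (rule root_test_convergence)
  have "root (Suc n) (norm (v (Suc n))) = norm (v (Suc n)) powr (1 / real (Suc n))" for n
    by (cases "v (Suc n) = 0") (auto simp: root_powr_inverse)
  with LIMSEQ_Suc[OF assms[unfolded root_null_def]]
  have "(\<lambda>n. root (Suc n) (norm (v (Suc n)))) \<longlonglongrightarrow> 0"
    by (simp only:)
  then show "(\<lambda>n. root n (norm (v n))) \<longlonglongrightarrow> 0"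
    by (rule LIMSEQ_imp_Suc)
qed simp

lemma power_mult_commuting:
  fixes x y :: "'a::monoid_mult"
  assumes "x * y = y * x"
  shows "(x * y) ^ n = x ^ n * y ^ n"
proof (induction n)
  case (Suc n)
  have "(x * y) ^ Suc n = x * (y * x ^ n) * y ^ n"
    by (simp add: Suc mult.assoc)
  also have "\<dots> = x * (x ^ n * y) * y ^ n"
    by (simp only: power_commuting_commutes[OF assms])
  also have "\<dots> = x ^ Suc n * y ^ Suc n"
    by (simp add: mult.assoc)
  finally show ?case .
qed simp

lemma power_idempotent:
  fixes p :: "'a::monoid_mult"
  assumes "p * p = p" and "n > 0"
  shows "p ^ n = p"
  using assms(2)
proof (induction n rule: nat_induct_non_zero)
  case (Suc n)
  then show ?case using assms(1) by (simp add: power_Suc2)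
qed simp

lemma power_mult_idempotent_commuting:
  fixes a p :: "'a::monoid_mult"
  assumes "a * p = p * a" and "p * p = p" and "n > 0"
  shows "(a * p) ^ n = a ^ n * p"
  by (simp only: power_mult_commuting[OF assms(1)] power_idempotent[OF assms(2,3)])

lemma left_ann_subset_mult: "left_ann y \<subseteq> left_ann (y * z)"
  by (auto simp: left_ann_def mult.assoc[symmetric])

lemma left_ann_idempotent_subset_iff:
  assumes "e * e = e"
  shows "left_ann e \<subseteq> left_ann y \<longleftrightarrow> e * y = y"
proof
  assume "left_ann e \<subseteq> left_ann y"
  moreover have "1 - e \<in> left_ann e"
    using assms by (simp add: left_ann_def left_diff_distrib)
  ultimately have "(1 - e) * y = 0"
    by (auto simp: left_ann_def)
  then show "e * y = y"
    by (simp add: left_diff_distrib)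
next
  assume "e * y = y"
  then show "left_ann e \<subseteq> left_ann y"
    using left_ann_subset_mult[of e y] by simp
qed

lemma left_ann_idempotents_eq_iff:
  assumes "e * e = e" and "f * f = f"
  shows "left_ann e = left_ann f \<longleftrightarrow> e * f = f \<and> f * e = e"
  using left_ann_idempotent_subset_iff[OF assms(1)] left_ann_idempotent_subset_iff[OF assms(2)]
  by blast

lemma ex1_projection_same_left_ann:
  assumes st_mult: "\<And>x y. st (x * y) = st y * st x" and "is_projection st e"
  shows "\<exists>!q. is_projection st q \<and> left_ann e = left_ann q"
proof (rule ex1I[of _ e])
  show "is_projection st e \<and> left_ann e = left_ann e" using assms(2) by simp
  fix f assume "is_projection st f \<and> left_ann e = left_ann f"
  then have "e * e = e" "st e = e" "f * f = f" "st f = f" and "left_ann e = left_ann f"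
    using assms(2) by (simp_all add: is_projection_def power2_eq_square)
  then have "e * f = f" "f * e = e"
    by (simp_all add: left_ann_idempotents_eq_iff)
  have "f = st (e * f)" using \<open>e * f = f\<close> \<open>st f = f\<close> by simp
  also have "\<dots> = f * e" using st_mult \<open>st e = e\<close> \<open>st f = f\<close> by simp
  finally show "f = e" using \<open>f * e = e\<close> by simp
qed

lemma commuting_outer_inverse_idempotents:
  fixes a b :: "'a::ring_1"
  assumes comm: "a * b = b * a" and abb: "a * b * b = b"
  shows "a * b * (a * b) = a * b" and "a * (1 - a * b) = (1 - a * b) * a"
    and "(1 - a * b) * (1 - a * b) = 1 - a * b"
proof -
  show idem: "a * b * (a * b) = a * b" by (metis abb comm mult.assoc)
  have "a * (a * b) = a * b * a" by (metis comm mult.assoc)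
  then show "a * (1 - a * b) = (1 - a * b) * a"
    by (simp add: right_diff_distrib left_diff_distrib)
  show "(1 - a * b) * (1 - a * b) = 1 - a * b"
    using idem by (simp add: algebra_simps)
qed

lemma is_gdrazin_invD:
  assumes "is_gdrazin_inv a b"
  shows "a * b = b * a" and "a * b * b = b" and "b * a * b = b" and "a * b * (a * b) = a * b"
    and "a * (1 - a * b) = (1 - a * b) * a" and "(1 - a * b) * (1 - a * b) = 1 - a * b"
    and "quasinilpotent (a * (1 - a * b))"
proof -
  have abb': "a * (b * b) = b" and comm: "a * b = b * a"
    using assms by (simp_all add: is_gdrazin_inv_def power2_eq_square)
  show "a * b = b * a" by (fact comm)
  show abb: "a * b * b = b"
    using abb' by (simp only: mult.assoc)
  from abb show "b * a * b = b"
    by (simp only: comm[symmetric])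
  show "a * b * (a * b) = a * b" and "a * (1 - a * b) = (1 - a * b) * a"
    and "(1 - a * b) * (1 - a * b) = 1 - a * b"
    using commuting_outer_inverse_idempotents[OF comm abb] by blast+
  have "a - a ^ 2 * b = a * (1 - a * b)"
    by (simp add: power2_eq_square algebra_simps)
  moreover have "quasinilpotent (a - a ^ 2 * b)"
    using assms by (simp only: is_gdrazin_inv_def)
  ultimately show "quasinilpotent (a * (1 - a * b))"
    by (simp only:)
qed

lemma is_gdrazin_inv_spectral_idempotent_annihilates:
  assumes B: "is_gdrazin_inv a b" and C: "is_gdrazin_inv a c"
  shows "a * b * (1 - a * c) = 0" and "(1 - a * c) * (a * b) = 0"
proof -
  define q where "q = 1 - a * c"
  have aq: "a * q = q * a" and qq: "q * q = q" and null: "root_null (\<lambda>n. (a * q) ^ n)"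
    using is_gdrazin_invD[OF C] by (simp_all add: q_def quasinilpotent_def root_null_def)
  note b = is_gdrazin_invD[OF B]
  have ab_power: "a * b = a ^ n * b ^ n" "a * b = b ^ n * a ^ n" if "n > 0" for n
    using power_idempotent[OF b(4) that] power_mult_commuting[OF b(1), of n]
      power_mult_commuting[OF b(1)[symmetric], of n] b(1) by simp_all
  have aq_power: "a ^ n * q = (a * q) ^ n" "q * a ^ n = (a * q) ^ n" if "n > 0" for n
    using power_mult_idempotent_commuting[OF aq qq that] power_commuting_commutes[OF aq, of n]
    by simp_all
  show "a * b * (1 - a * c) = 0"
    unfolding q_def[symmetric]
  proof (rule root_null_left_factor_eq_0[OF null])
    fix n :: nat assume "n > 0"
    then show "a * b * q = b ^ n * (a * q) ^ n"
      using ab_power(2) aq_power(1) by (simp add: mult.assoc)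
  qed
  show "(1 - a * c) * (a * b) = 0"
    unfolding q_def[symmetric]
  proof (rule root_null_right_factor_eq_0[OF null])
    fix n :: nat assume "n > 0"
    then show "q * (a * b) = (a * q) ^ n * b ^ n"
      using ab_power(1) aq_power(2) by (simp add: mult.assoc[symmetric])
  qed
qed

lemma is_gdrazin_inv_unique:
  assumes B: "is_gdrazin_inv a b" and C: "is_gdrazin_inv a c"
  shows "b = c"
proof -
  note b = is_gdrazin_invD[OF B] and c = is_gdrazin_invD[OF C]
  have "a * b = a * b * (a * c)"
    using is_gdrazin_inv_spectral_idempotent_annihilates(1)[OF B C]
    by (simp add: right_diff_distrib)
  also have "\<dots> = a * c"
    using is_gdrazin_inv_spectral_idempotent_annihilates(2)[OF C B]
    by (simp add: left_diff_distrib)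
  finally have ab: "a * b = a * c" .
  have "b = b * (a * c)" using b(3) ab by (simp add: mult.assoc)
  also have "\<dots> = a * c * c" using ab b(1) by (metis mult.assoc)
  also have "\<dots> = c" by (fact c(2))
  finally show ?thesis .
qed

lemma gdrazin_eq: "is_gdrazin_inv a d \<Longrightarrow> gdrazin a = d"
  unfolding gdrazin_def by (rule the_equality) (auto intro: is_gdrazin_inv_unique)

lemma left_ann_gdrazin_inv:
  assumes "is_gdrazin_inv a d"
  shows "left_ann d = left_ann (a * d)"
  using left_ann_subset_mult[of "a * d" d] left_ann_subset_mult[of d a] is_gdrazin_invD(1,2)[OF assms]
  by auto

lemma root_null_residual_of_gdrazin_inv:
  assumes gd: "is_gdrazin_inv a d" and absorb: "y * a * (a * d) = a * d"
  shows "root_null (\<lambda>n. a ^ n - y * a ^ (n + 1))"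
proof -
  note D = is_gdrazin_invD[OF gd]
  define p where "p = 1 - a * d"
  have "(1 - y * a) * (a * d) = 0"
    using absorb by (simp add: left_diff_distrib)
  then have p_right_neutral: "(1 - y * a) * p = 1 - y * a"
    by (simp add: p_def right_diff_distrib)
  have "root_null (\<lambda>n. (a * p) ^ n)"
    using D(7) by (simp add: p_def quasinilpotent_def root_null_def)
  then show ?thesis
  proof (rule root_null_dominated)
    show "\<forall>\<^sub>F n in sequentially.
            norm (a ^ n - y * a ^ (n + 1)) \<le> norm (1 - y * a) * 1 ^ n * norm ((a * p) ^ n)"
    proof (rule eventually_sequentiallyI[of 1])
      fix n :: nat assume "n \<ge> 1"
      then have "(a * p) ^ n = p * a ^ n"
        using power_mult_idempotent_commuting[OF D(5,6)] power_commuting_commutes[OF D(5)]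
        by (simp add: p_def)
      then have "(1 - y * a) * (a * p) ^ n = (1 - y * a) * p * a ^ n"
        by (simp only: mult.assoc)
      also have "\<dots> = (1 - y * a) * a ^ n"
        by (simp only: p_right_neutral)
      also have "\<dots> = a ^ n - y * a ^ (n + 1)"
        by (simp add: left_diff_distrib mult.assoc)
      finally show "norm (a ^ n - y * a ^ (n + 1)) \<le> norm (1 - y * a) * 1 ^ n * norm ((a * p) ^ n)"
        using norm_mult_ineq[of "1 - y * a" "(a * p) ^ n"] by simp
    qed
  qed simp_all
qed

lemma gcEP_inverse_of_gdrazin_inv:
  assumes gd: "is_gdrazin_inv a d" and qq: "q * q = q" and ann: "left_ann d = left_ann q"
  shows "d * q = a * (d * q) ^ 2" and "a * (d * q) = q"
    and "root_null (\<lambda>n. a ^ n - d * q * a ^ (n + 1))"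
proof -
  note D = is_gdrazin_invD[OF gd]
  have adq: "a * d * q = q" and qad: "q * (a * d) = a * d"
    using left_ann_idempotents_eq_iff[OF D(4) qq] ann left_ann_gdrazin_inv[OF gd] by simp_all
  show "a * (d * q) = q" using adq by (simp add: mult.assoc)
  have "q * d = q * (a * d) * d" using D(2) by (simp add: mult.assoc)
  also have "\<dots> = d" using qad D(2) by simp
  finally have qd: "q * d = d" .
  have "a * (d * q) ^ 2 = a * d * q * (d * q)"
    by (simp add: power2_eq_square mult.assoc)
  also have "\<dots> = d * q"
    using adq qd by (simp add: mult.assoc[symmetric])
  finally show "d * q = a * (d * q) ^ 2" ..
  have "a * (a * d) = a * (d * a)" by (simp only: D(1))
  then have "d * q * a * (a * d) = d * (q * (a * d)) * a"
    by (simp only: mult.assoc)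
  also have "\<dots> = d * a * d * a"
    using qad by (simp only: mult.assoc)
  also have "\<dots> = a * d"
    using D(1,3) by simp
  finally show "root_null (\<lambda>n. a ^ n - d * q * a ^ (n + 1))"
    by (rule root_null_residual_of_gdrazin_inv[OF gd])
qed

text \<open>The conditions defining a gcEP inverse except (a x)^* = a x, which the construction of
  a^d does not use.\<close>

locale gcEP_equations =
  fixes a x :: "'a::{real_normed_algebra_1,banach}"
  assumes x_eq: "x = a * x ^ 2"
    and root_null_residual: "root_null (\<lambda>n. a ^ n - x * a ^ (n + 1))"
begin

lemma a_x_x: "a * (x * x) = x"
  using x_eq by (simp add: power2_eq_square)

lemma a_power_x_Suc: "a * x ^ Suc (Suc n) = x ^ Suc n"
proof -
  have "a * x ^ Suc (Suc n) = a * (x * x) * x ^ n"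
    by (simp only: power_Suc mult.assoc)
  then show ?thesis by (simp only: a_x_x power_Suc)
qed

lemma power_a_power_x_Suc: "a ^ n * x ^ Suc n = x"
proof (induction n)
  case (Suc n)
  have "a ^ Suc n * x ^ Suc (Suc n) = a ^ n * (a * x ^ Suc (Suc n))"
    by (simp only: power_Suc2 mult.assoc)
  with Suc show ?case by (simp only: a_power_x_Suc)
qed simp

lemma power_a_power_x:
  assumes "n > 0"
  shows "a ^ n * x ^ n = a * x"
proof -
  obtain m where "n = Suc m" using assms by (cases n) auto
  then have "a ^ n * x ^ n = a * (a ^ m * x ^ Suc m)"
    by (simp only: power_Suc mult.assoc)
  then show ?thesis by (simp only: power_a_power_x_Suc)
qed

lemma x_a_ax: "x * a * (a * x) = a * x"
proof -
  have "a * x - x * a * (a * x) = 0"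
  proof (rule root_null_right_factor_eq_0[OF root_null_residual])
    fix n :: nat assume "n > 0"
    have "(a ^ n - x * a ^ (n + 1)) * x ^ n = a ^ n * x ^ n - x * (a * (a ^ n * x ^ n))"
      by (simp add: left_diff_distrib mult.assoc)
    with \<open>n > 0\<close> show "a * x - x * a * (a * x) = (a ^ n - x * a ^ (n + 1)) * x ^ n"
      by (simp add: power_a_power_x mult.assoc)
  qed
  then show ?thesis by simp
qed

lemma x_a_x: "x * a * x = x"
proof -
  have "x * a * x = x * a * (a * (x * x))"
    by (simp only: a_x_x)
  also have "\<dots> = x * a * (a * x) * x"
    by (simp only: mult.assoc)
  also have "\<dots> = a * x * x"
    by (simp only: x_a_ax)
  also have "\<dots> = x"
    by (simp only: mult.assoc a_x_x)
  finally show ?thesis .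
qed

lemma ax_idempotent: "a * x * (a * x) = a * x"
  using x_a_x by (simp add: mult.assoc)

lemma a_ax: "a * (a * x) = a * x * a * (a * x)"
  using x_a_ax by (simp add: mult.assoc)

lemma power_a_ax: "a ^ k * (a * x) = a * x * a ^ k * (a * x)"
proof (induction k)
  case 0
  show ?case using ax_idempotent by simp
next
  case (Suc k)
  have "a ^ Suc k * (a * x) = a * (a ^ k * (a * x))"
    by (simp only: power_Suc mult.assoc)
  also have "\<dots> = a * (a * x) * a ^ k * (a * x)"
    by (subst Suc.IH) (simp only: mult.assoc)
  also have "\<dots> = a * x * a * (a * x) * a ^ k * (a * x)"
    by (simp only: a_ax)
  also have "\<dots> = a * x * a * (a * x * a ^ k * (a * x))"
    by (simp only: mult.assoc)
  also have "\<dots> = a * x * a * (a ^ k * (a * x))"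
    by (simp only: Suc.IH)
  also have "\<dots> = a * x * a ^ Suc k * (a * x)"
    by (simp only: power_Suc mult.assoc)
  finally show ?case .
qed

lemma x_power_a_x: "x * a ^ Suc k * x = a ^ k * x"
proof -
  have "x * a ^ Suc k * x = x * a * (a ^ k * (a * (x * x)))"
    by (simp only: power_Suc mult.assoc a_x_x)
  also have "\<dots> = x * a * (a ^ k * (a * x)) * x"
    by (simp only: mult.assoc)
  also have "\<dots> = x * a * (a * x * a ^ k * (a * x)) * x"
    by (simp only: power_a_ax)
  also have "\<dots> = x * a * (a * x) * a ^ k * (a * x) * x"
    by (simp only: mult.assoc)
  also have "\<dots> = a * x * a ^ k * (a * x) * x"
    by (simp only: x_a_ax)
  also have "\<dots> = a ^ k * (a * x) * x"
    by (simp only: power_a_ax)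
  also have "\<dots> = a ^ k * x"
    by (simp only: mult.assoc a_x_x)
  finally show ?thesis .
qed

lemma power_x_power_a_x: "x ^ k * a ^ k * x = x"
proof (induction k)
  case (Suc k)
  have "x ^ Suc k * a ^ Suc k * x = x ^ k * (x * a ^ Suc k * x)"
    by (simp only: power_Suc2 mult.assoc)
  also have "\<dots> = x ^ k * (a ^ k * x)"
    by (simp only: x_power_a_x)
  also have "\<dots> = x"
    using Suc.IH by (simp only: mult.assoc[symmetric])
  finally show ?case .
qed simp

definition drazin_approx :: "nat \<Rightarrow> 'a" where
  "drazin_approx n = x ^ Suc n * a ^ n"

definition drazin_series :: 'a where
  "drazin_series = x - (\<Sum>j. x ^ Suc j * (a ^ j - x * a ^ (j + 1)))"

lemma drazin_approx_identities:
  shows "a * drazin_approx (Suc n) * drazin_approx (Suc n) = drazin_approx (Suc n)"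
    and "drazin_approx n * a = a * drazin_approx (Suc n)"
    and "a * drazin_approx (Suc n) * x = x"
    and "a * x * drazin_approx n = drazin_approx n"
proof -
  have "a * drazin_approx (Suc n) * drazin_approx (Suc n)
      = a * x ^ Suc (Suc n) * (a ^ Suc n * x ^ Suc (Suc n)) * a ^ Suc n"
    by (simp only: drazin_approx_def mult.assoc)
  also have "\<dots> = x ^ Suc n * x * a ^ Suc n"
    by (simp only: a_power_x_Suc power_a_power_x_Suc mult.assoc[symmetric])
  finally show "a * drazin_approx (Suc n) * drazin_approx (Suc n) = drazin_approx (Suc n)"
    by (simp only: drazin_approx_def power_Suc2)
  have "drazin_approx n * a = x ^ Suc n * a ^ Suc n"
    by (simp only: drazin_approx_def mult.assoc power_Suc2)
  also have "\<dots> = a * drazin_approx (Suc n)"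
    by (simp only: drazin_approx_def mult.assoc[symmetric] a_power_x_Suc)
  finally show "drazin_approx n * a = a * drazin_approx (Suc n)" .
  have "a * drazin_approx (Suc n) * x = x ^ Suc n * a ^ Suc n * x"
    by (simp only: drazin_approx_def mult.assoc[symmetric] a_power_x_Suc)
  then show "a * drazin_approx (Suc n) * x = x"
    by (simp only: power_x_power_a_x)
  have "a * x * drazin_approx n = a * (x * x) * x ^ n * a ^ n"
    by (simp only: drazin_approx_def power_Suc mult.assoc)
  then show "a * x * drazin_approx n = drazin_approx n"
    by (simp only: a_x_x drazin_approx_def power_Suc mult.assoc)
qed

lemma drazin_approx_eq_sum:
  "drazin_approx n = x - (\<Sum>j<n. x ^ Suc j * (a ^ j - x * a ^ (j + 1)))"
proof (induction n)
  case (Suc n)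
  have "drazin_approx (Suc n) = x ^ Suc n * (x * a ^ (n + 1))"
    by (simp add: drazin_approx_def power_Suc2 mult.assoc del: power_Suc)
  then have "drazin_approx (Suc n) = drazin_approx n - x ^ Suc n * (a ^ n - x * a ^ (n + 1))"
    by (simp add: drazin_approx_def right_diff_distrib)
  with Suc.IH show ?case by simp
qed (simp add: drazin_approx_def)

lemma drazin_approx_LIMSEQ: "drazin_approx \<longlonglongrightarrow> drazin_series"
proof -
  have "root_null (\<lambda>j. x ^ Suc j * (a ^ j - x * a ^ (j + 1)))"
  proof (rule root_null_dominated[OF root_null_residual, where K = "norm x" and C = "norm x"])
    show "\<forall>\<^sub>F j in sequentially. norm (x ^ Suc j * (a ^ j - x * a ^ (j + 1)))
            \<le> norm x * norm x ^ j * norm (a ^ j - x * a ^ (j + 1))"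
    proof (rule always_eventually, rule allI)
      fix j
      have "norm (x ^ Suc j * (a ^ j - x * a ^ (j + 1)))
            \<le> norm (x ^ Suc j) * norm (a ^ j - x * a ^ (j + 1))"
        by (rule norm_mult_ineq)
      also have "\<dots> \<le> norm x ^ Suc j * norm (a ^ j - x * a ^ (j + 1))"
        by (intro mult_right_mono norm_power_ineq) simp
      finally show "norm (x ^ Suc j * (a ^ j - x * a ^ (j + 1)))
            \<le> norm x * norm x ^ j * norm (a ^ j - x * a ^ (j + 1))" by simp
    qed
  qed simp_all
  then have "summable (\<lambda>j. x ^ Suc j * (a ^ j - x * a ^ (j + 1)))"
    by (rule summable_if_root_null)
  then show ?thesis
    unfolding drazin_approx_eq_sum drazin_series_def
    by (intro tendsto_diff tendsto_const summable_LIMSEQ)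
qed

lemma drazin_series_identities:
  shows "a * drazin_series * drazin_series = drazin_series"
    and "drazin_series * a = a * drazin_series"
    and "a * drazin_series * x = x"
    and "a * x * drazin_series = drazin_series"
proof -
  let ?D = drazin_approx and ?d = drazin_series
  note lim = drazin_approx_LIMSEQ
  note lim_Suc = LIMSEQ_Suc[OF lim]
  have "(\<lambda>n. ?D (Suc n)) \<longlonglongrightarrow> a * ?d * ?d"
    using tendsto_mult[OF tendsto_mult[OF tendsto_const[of a] lim_Suc] lim_Suc]
    by (simp only: drazin_approx_identities(1))
  from this lim_Suc show "a * ?d * ?d = ?d" by (rule LIMSEQ_unique)
  have "(\<lambda>n. a * ?D (Suc n)) \<longlonglongrightarrow> ?d * a"
    using tendsto_mult[OF lim tendsto_const[of a]]
    by (simp only: drazin_approx_identities(2))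
  from this tendsto_mult[OF tendsto_const[of a] lim_Suc] show "?d * a = a * ?d"
    by (rule LIMSEQ_unique)
  have "(\<lambda>n. x) \<longlonglongrightarrow> a * ?d * x"
    using tendsto_mult[OF tendsto_mult[OF tendsto_const[of a] lim_Suc] tendsto_const[of x]]
    by (simp only: drazin_approx_identities(3))
  then show "a * ?d * x = x" by (simp add: LIMSEQ_const_iff)
  have "?D \<longlonglongrightarrow> a * x * ?d"
    using tendsto_mult[OF tendsto_const[of "a * x"] lim]
    by (simp only: drazin_approx_identities(4))
  from this lim show "a * x * ?d = ?d" by (rule LIMSEQ_unique)
qed

lemma is_gdrazin_inv_drazin_series: "is_gdrazin_inv a drazin_series"
proof -
  let ?d = drazin_series
  note d = drazin_series_identities
  define p where "p = 1 - a * ?d"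
  have ap: "a * p = p * a" and pp: "p * p = p"
    using commuting_outer_inverse_idempotents(2,3)[OF d(2)[symmetric] d(1)] by (simp_all add: p_def)
  have px: "p * x = 0" using d(3) by (simp add: p_def left_diff_distrib)
  have "root_null (\<lambda>n. (a * p) ^ n)"
  proof (rule root_null_dominated[OF root_null_residual, where K = "norm p" and C = 1])
    show "\<forall>\<^sub>F n in sequentially. norm ((a * p) ^ n) \<le> norm p * 1 ^ n * norm (a ^ n - x * a ^ (n + 1))"
    proof (rule eventually_sequentiallyI[of 1])
      fix n :: nat assume "n \<ge> 1"
      then have "(a * p) ^ n = p * a ^ n"
        using power_mult_idempotent_commuting[OF ap pp] power_commuting_commutes[OF ap] by simp
      also have "\<dots> = p * (a ^ n - x * a ^ (n + 1))"
        using px by (simp add: right_diff_distrib mult.assoc[symmetric])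
      finally show "norm ((a * p) ^ n) \<le> norm p * 1 ^ n * norm (a ^ n - x * a ^ (n + 1))"
        by (simp add: norm_mult_ineq)
    qed
  qed simp_all
  moreover have "a - a ^ 2 * ?d = a * p"
    by (simp add: p_def power2_eq_square right_diff_distrib mult.assoc)
  ultimately show ?thesis
    using d(1,2) by (simp add: is_gdrazin_inv_def quasinilpotent_def root_null_def
        power2_eq_square mult.assoc)
qed

lemma left_ann_drazin_series: "left_ann drazin_series = left_ann (a * x)"
proof -
  let ?d = drazin_series
  note d = drazin_series_identities
  have "a * ?d * (a * x) = a * (a * ?d * x)"
    using d(2) by (metis mult.assoc)
  then have "a * ?d * (a * x) = a * x" by (simp only: d(3))
  moreover have "a * x * (a * ?d) = a * ?d"
    using d(2,4) by (metis mult.assoc)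
  moreover have "a * ?d * (a * ?d) = a * ?d"
    using is_gdrazin_invD(4)[OF is_gdrazin_inv_drazin_series] .
  ultimately show ?thesis
    using left_ann_idempotents_eq_iff[OF _ ax_idempotent]
      left_ann_gdrazin_inv[OF is_gdrazin_inv_drazin_series] by simp
qed

lemma gdrazin_invertible_left_ann:
  shows "a \<in> gdrazin_invertible" and "left_ann (gdrazin a) = left_ann (a * x)"
  using is_gdrazin_inv_drazin_series left_ann_drazin_series
  by (auto simp: gdrazin_invertible_def gdrazin_eq)

end

theorem corollary2p4:
  fixes cs :: "complex \<Rightarrow> 'a::{real_normed_algebra_1,banach} \<Rightarrow> 'a"
    and st :: "'a \<Rightarrow> 'a" and a :: 'a
  assumes "complex_banach_star_algebra cs st"
  shows "a \<in> gcEP_invertible st \<longleftrightarrow>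
           (a \<in> gdrazin_invertible \<and>
            (\<exists>!q. is_projection st q \<and> left_ann (gdrazin a) = left_ann q))"
proof
  have st_mult: "\<And>x y. st (x * y) = st y * st x"
    using assms by (simp add: complex_banach_star_algebra_def)
  assume "a \<in> gcEP_invertible st"
  then obtain x where "x = a * x ^ 2" and st_ax: "st (a * x) = a * x"
    and "root_null (\<lambda>n. a ^ n - x * a ^ (n + 1))"
    by (auto simp: gcEP_invertible_def root_null_def)
  then interpret gcEP_equations a x by unfold_locales
  have "is_projection st (a * x)"
    using ax_idempotent st_ax by (simp add: is_projection_def power2_eq_square)
  then show "a \<in> gdrazin_invertible \<and> (\<exists>!q. is_projection st q \<and> left_ann (gdrazin a) = left_ann q)"
    using ex1_projection_same_left_ann[OF st_mult] gdrazin_invertible_left_ann by simp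
next
  assume "a \<in> gdrazin_invertible \<and> (\<exists>!q. is_projection st q \<and> left_ann (gdrazin a) = left_ann q)"
  then obtain d q where gd: "is_gdrazin_inv a d" and "is_projection st q"
    and "left_ann (gdrazin a) = left_ann q"
    by (auto simp: gdrazin_invertible_def)
  then have ann: "left_ann d = left_ann q" and "q * q = q" and "st q = q"
    by (simp_all add: gdrazin_eq is_projection_def power2_eq_square)
  with gcEP_inverse_of_gdrazin_inv[OF gd \<open>q * q = q\<close> ann]
  show "a \<in> gcEP_invertible st"
    unfolding gcEP_invertible_def root_null_def by auto
qed

end
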